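(* Let $s,m$ be positive integers with $m$ odd and $n=sm$. Let $k$ be a positive integer with $t=\gcd(n,k)$ such that $\mathbb{F}_{2^t}\subseteq\mathbb{F}_{2^s}$ and $n/t$ is odd. Fix $\alpha\in\mathbb{F}_{2^s}\setminus\{0\}$ and let \[ G(x)=x^{2^k+1}+\alpha(x^{2^s}+x)^{2^n-1}+\alpha=\begin{cases}x^{2^k+1}+\alpha, & x\in\mathbb{F}_{2^s},\\ x^{2^k+1}, & x\notin\mathbb{F}_{2^s},\end{cases} \] as a function $\mathbb{F}_{2^n}\to\mathbb{F}_{2^n}$. Then $\delta_{G,c}\leq 3$ for every $c\in\mathbb{F}_{2^t}\setminus\{1\}$.
   Context: For $F:\mathbb{F}_{2^n}\to\mathbb{F}_{2^n}$ and $c\in\mathbb{F}_{2^n}$, let ${}_c\Delta_F(a,b)=\#\{x\in\mathbb{F}_{2^n}: F(x+a)-cF(x)=b\}$ and the $c$-differential uniformity is $\delta_{F,c}=\max\{{}_c\Delta_F(a,b): a,b\in\mathbb{F}_{2^n},\ a\neq 0\text{ if } c=1\}$. *)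

theory Defs
  imports Main
begin

definition subfield_pow2 :: "nat \<Rightarrow> 'a::field set" where
  "subfield_pow2 s = {x. x ^ (2 ^ s) = x}"

definition c_Delta :: "('a::{field,finite} \<Rightarrow> 'a) \<Rightarrow> 'a \<Rightarrow> 'a \<Rightarrow> 'a \<Rightarrow> nat" where
  "c_Delta F c a b = card {x. F (x + a) - c * F x = b}"

definition c_diff_uniformity :: "('a::{field,finite} \<Rightarrow> 'a) \<Rightarrow> 'a \<Rightarrow> nat" where
  "c_diff_uniformity F c = Max {c_Delta F c a b | a b. a \<noteq> 0 \<or> c \<noteq> 1}"

end

theory Submission
  imports Defs "HOL-Computational_Algebra.Primes"
begin

text \<open>In characteristic 2, for \<open>P x = x ^ (2 ^ k + 1)\<close> and \<open>c ^ (2 ^ k) = c\<close>, one has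
  \<open>(1 + c) * (P (x + a) - c * P x) = P ((1 + c) * x + a) + c * P a\<close>. Since \<open>P\<close> permutes
  \<open>GF(2^n)\<close> when \<open>n / gcd n k\<close> is odd and \<open>c \<noteq> 1\<close>, every \<open>c\<close>-derivative of \<open>P\<close> is injective.
  Now \<open>G\<close> is \<open>P\<close> plus \<open>\<alpha>\<close> times the indicator of \<open>GF(2^s)\<close>, so on the solutions of
  \<open>G (x + a) - c * G x = b\<close> the point \<open>x\<close> is determined by the \<open>c\<close>-derivative of the indicator
  part, which takes at most three values.\<close>

lemma nonzero_power_card_minus_one:
  fixes x :: "'a::{field,finite}"
  assumes "x \<noteq> 0"
  shows "x ^ (card (UNIV::'a set) - 1) = 1"
proof -
  let ?U = "UNIV - {0::'a}"
  have "(\<Prod>y\<in>?U. x * y) = (\<Prod>y\<in>?U. y)"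
    by (rule prod.reindex_bij_witness[of _ "\<lambda>y. y / x" "\<lambda>y. x * y"]) (use assms in auto)
  moreover have "(\<Prod>y\<in>?U. x * y) = x ^ card ?U * (\<Prod>y\<in>?U. y)"
    by (simp add: prod.distrib)
  moreover have "(\<Prod>y\<in>?U. y) \<noteq> 0"
    by simp
  ultimately show ?thesis
    by (simp add: card_Diff_singleton)
qed

lemma power_card_minus_one_eq_of_bool:
  fixes x :: "'a::{field,finite}"
  shows "x ^ (card (UNIV::'a set) - 1) = of_bool (x \<noteq> 0)"
proof -
  have "card {0, 1::'a} \<le> card (UNIV::'a set)"
    by (rule card_mono) auto
  then have "card (UNIV::'a set) - 1 \<noteq> 0"
    by simp
  then show ?thesis
    using nonzero_power_card_minus_one[of x] by (cases "x = 0") auto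
qed

lemma power_card_eq_same:
  fixes x :: "'a::{field,finite}"
  shows "x ^ card (UNIV::'a set) = x"
proof (cases "x = 0")
  case False
  have "card (UNIV::'a set) = Suc (card (UNIV::'a set) - 1)"
    by (simp add: finite_UNIV_card_ge_0)
  then have "x ^ card (UNIV::'a set) = x * x ^ (card (UNIV::'a set) - 1)"
    by (metis power_Suc)
  then show ?thesis
    using nonzero_power_card_minus_one[OF False] by simp
qed (simp add: finite_UNIV_card_ge_0)

lemma CHAR_eq_2_if_card_eq_power_2:
  assumes "card (UNIV::'a::{field,finite} set) = 2 ^ n" and "n > 0"
  shows "CHAR('a) = 2"
proof -
  have "odd (card (UNIV::'a set) - 1)"
    using assms by simp
  moreover have "(-1::'a) ^ (card (UNIV::'a set) - 1) = 1"
    by (rule nonzero_power_card_minus_one) simp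
  ultimately have "(-1::'a) = 1"
    by simp
  then have "of_nat 2 = (0::'a)"
    by (simp add: neg_eq_iff_add_eq_0)
  then have "CHAR('a) dvd 2"
    by (simp only: of_nat_eq_0_iff_char_dvd)
  moreover from this have "CHAR('a) \<noteq> 0"
    by (intro notI) simp
  ultimately show ?thesis
    using dvd_imp_le[of "CHAR('a)" 2] CHAR_not_1[where 'a='a] by linarith
qed

lemma two_eq_0_if_CHAR_2:
  assumes "CHAR('a::semiring_1) = 2"
  shows "(2::'a) = 0"
  using of_nat_CHAR[where 'a='a] assms by simp

lemma power_power_fixed_dvd:
  fixes z :: "'a::monoid_mult"
  assumes "z ^ (p ^ i) = z" and "i dvd j"
  shows "z ^ (p ^ j) = z"
proof -
  obtain r where "j = i * r"
    using assms(2) by blast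
  moreover have "z ^ (p ^ (i * r)) = z" for r
    by (induction r) (simp_all add: power_add power_mult assms(1))
  ultimately show ?thesis
    by simp
qed

lemma power_power_fixed_gcd:
  fixes z :: "'a::monoid_mult"
  assumes zi: "z ^ (p ^ i) = z" and zj: "z ^ (p ^ j) = z"
  shows "z ^ (p ^ gcd i j) = z"
proof (cases "i = 0")
  case False
  then obtain x y where bezout: "i * x = j * y + gcd i j"
    using bezout_nat by blast
  have "z = z ^ (p ^ (i * x))"
    using power_power_fixed_dvd[OF zi] by simp
  also have "\<dots> = (z ^ (p ^ (j * y))) ^ (p ^ gcd i j)"
    by (simp only: bezout power_add power_mult)
  also have "\<dots> = z ^ (p ^ gcd i j)"
    using power_power_fixed_dvd[OF zj] by simp
  finally show ?thesis ..
qed (simp add: zj)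

lemma gcd_double_eq_gcd_if_odd_quotient:
  fixes n k :: nat
  assumes "odd (n div gcd n k)"
  shows "gcd (2 * k) n = gcd n k"
proof -
  define t where "t = gcd n k"
  obtain n' k' where n': "n = t * n'" and k': "k = t * k'"
    unfolding t_def by (meson dvd_def gcd_dvd1 gcd_dvd2)
  have "n \<noteq> 0"
    using assms by (intro notI) simp
  then have "t \<noteq> 0"
    by (simp add: t_def)
  then have "odd n'"
    using assms n' unfolding t_def[symmetric] by simp
  then have "gcd (2 * k') n' = gcd k' n'"
    by (simp add: gcd_mult_left_left_cancel)
  have "gcd (2 * k) n = t * gcd (2 * k') n'"
    by (simp add: n' k' gcd_mult_distrib_nat mult.left_commute)
  also have "\<dots> = gcd k n"
    by (simp add: \<open>gcd (2 * k') n' = gcd k' n'\<close> n' k' gcd_mult_distrib_nat)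
  finally show ?thesis
    by (simp add: gcd.commute t_def)
qed

lemma Gold_root_of_unity_eq_1:
  fixes z :: "'a::{field,finite}"
  assumes card: "card (UNIV::'a set) = 2 ^ n"
    and odd: "odd (n div gcd n k)"
    and z: "z ^ (2 ^ k + 1) = 1"
  shows "z = 1"
proof -
  have "n > 0"
    using odd by (intro gr0I) simp
  then have char2: "CHAR('a) = 2"
    using card by (intro CHAR_eq_2_if_card_eq_power_2)
  have z_frob: "z ^ (2 ^ k) = inverse z"
    using z by (simp add: inverse_unique power_add)
  have "z ^ (2 ^ (2 * k)) = (z ^ (2 ^ k)) ^ (2 ^ k)"
    by (simp only: mult_2 power_add power_mult)
  also have "\<dots> = z"
    by (simp add: z_frob power_inverse)
  finally have "z ^ (2 ^ (2 * k)) = z" .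
  moreover have "z ^ (2 ^ n) = z"
    using power_card_eq_same[of z] card by simp
  ultimately have "z ^ (2 ^ gcd (2 * k) n) = z"
    by (rule power_power_fixed_gcd)
  then have "z ^ (2 ^ k) = z"
    using odd by (simp add: gcd_double_eq_gcd_if_odd_quotient power_power_fixed_dvd)
  then have "z ^ 2 = 1"
    using z by (simp add: power_add power2_eq_square)
  then have "(z + 1) ^ 2 = 0"
    using char2 by (simp add: freshmans_dream two_eq_0_if_CHAR_2)
  then show ?thesis
    using char2 by (simp add: uminus_CHAR_2 eq_neg_iff_add_eq_0[symmetric])
qed

lemma inj_Gold_power:
  assumes "card (UNIV::'a::{field,finite} set) = 2 ^ n"
    and "odd (n div gcd n k)"
  shows "inj (\<lambda>x::'a. x ^ (2 ^ k + 1))"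
proof (rule injI)
  fix x y :: 'a
  assume eq: "x ^ (2 ^ k + 1) = y ^ (2 ^ k + 1)"
  show "x = y"
  proof (cases "y = 0")
    case False
    with eq have "(x / y) ^ (2 ^ k + 1) = 1"
      by (simp add: power_divide)
    with assms have "x / y = 1"
      by (rule Gold_root_of_unity_eq_1)
    with False show ?thesis
      by simp
  qed (use eq in simp)
qed

lemma Gold_c_derivative_linearization:
  fixes x a c :: "'a::comm_ring_1"
  assumes char2: "CHAR('a) = 2" and c: "c ^ (2 ^ k) = c"
  shows "(1 + c) * ((x + a) ^ (2 ^ k + 1) - c * x ^ (2 ^ k + 1))
       = ((1 + c) * x + a) ^ (2 ^ k + 1) + c * a ^ (2 ^ k + 1)"
proof -
  have frob: "(u + v) ^ (2 ^ k) = u ^ (2 ^ k) + v ^ (2 ^ k)" for u v :: 'a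
    by (rule freshmans_dream') (simp_all add: char2)
  define X A where "X = x ^ (2 ^ k)" and "A = a ^ (2 ^ k)"
  have "(x + a) ^ (2 ^ k + 1) = (X + A) * (x + a)"
    by (simp add: X_def A_def frob)
  moreover have "((1 + c) * x + a) ^ (2 ^ k + 1) = ((1 + c) * X + A) * ((1 + c) * x + a)"
    by (simp add: X_def A_def frob power_mult_distrib c)
  moreover have "x ^ (2 ^ k + 1) = X * x" and "a ^ (2 ^ k + 1) = A * a"
    by (simp_all add: X_def A_def)
  moreover have "(1 + c) * ((X + A) * (x + a) - c * (X * x))
      = ((1 + c) * X + A) * ((1 + c) * x + a) + c * (A * a) - 2 * (c * (1 + c) * X * x)"
    by (simp add: algebra_simps)
  ultimately show ?thesis
    by (simp add: two_eq_0_if_CHAR_2[OF char2])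
qed

lemma inj_Gold_c_derivative:
  fixes c :: "'a::{field,finite}"
  assumes card: "card (UNIV::'a set) = 2 ^ n"
    and odd: "odd (n div gcd n k)"
    and c: "c ^ (2 ^ k) = c" and "c \<noteq> 1"
  shows "inj (\<lambda>x. (x + a) ^ (2 ^ k + 1) - c * x ^ (2 ^ k + 1))"
proof (rule injI)
  have "n > 0"
    using odd by (intro gr0I) simp
  then have char2: "CHAR('a) = 2"
    using card by (intro CHAR_eq_2_if_card_eq_power_2)
  have unit: "1 + c \<noteq> 0"
    using \<open>c \<noteq> 1\<close> uminus_CHAR_2[OF char2, of 1] by (auto simp: add_eq_0_iff)
  fix x y :: 'a
  assume "(x + a) ^ (2 ^ k + 1) - c * x ^ (2 ^ k + 1) = (y + a) ^ (2 ^ k + 1) - c * y ^ (2 ^ k + 1)"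
  then have "((1 + c) * x + a) ^ (2 ^ k + 1) = ((1 + c) * y + a) ^ (2 ^ k + 1)"
    using Gold_c_derivative_linearization[OF char2 c, of x a]
      Gold_c_derivative_linearization[OF char2 c, of y a] by simp
  then have "(1 + c) * x + a = (1 + c) * y + a"
    by (rule injD[OF inj_Gold_power[OF card odd]])
  then show "x = y"
    using unit by simp
qed

lemma c_Delta_add_le_card_range:
  fixes P h :: "'a::{field,finite} \<Rightarrow> 'a"
  assumes "inj (\<lambda>x. P (x + a) - c * P x)"
  shows "c_Delta (\<lambda>x. P x + h x) c a b \<le> card (range (\<lambda>x. h (x + a) - c * h x))"
proof -
  let ?dP = "\<lambda>x. P (x + a) - c * P x" and ?dh = "\<lambda>x. h (x + a) - c * h x"
  let ?Sol = "{x. P (x + a) + h (x + a) - c * (P x + h x) = b}"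
  have dP_eq: "?dP x = b - ?dh x" if "x \<in> ?Sol" for x
    using that by (simp add: algebra_simps)
  have "inj_on ?dh ?Sol"
  proof (rule inj_onI)
    fix x y
    assume "x \<in> ?Sol" and "y \<in> ?Sol" and "?dh x = ?dh y"
    then have "?dP x = ?dP y"
      using dP_eq by simp
    then show "x = y"
      by (rule injD[OF assms])
  qed
  then have "card ?Sol = card (?dh ` ?Sol)"
    by (simp add: card_image)
  also have "\<dots> \<le> card (range ?dh)"
    by (intro card_mono) auto
  finally show ?thesis
    unfolding c_Delta_def .
qed

lemma card_range_c_derivative_indicator_le_3:
  fixes S :: "'a::ring_1 set" and \<alpha> c :: 'a
  assumes diff_closed: "\<And>x y. x \<in> S \<Longrightarrow> y \<in> S \<Longrightarrow> x - y \<in> S"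
  shows "card (range (\<lambda>x. \<alpha> * of_bool (x + a \<in> S) - c * (\<alpha> * of_bool (x \<in> S)))) \<le> 3"
    (is "card (range ?d) \<le> 3")
proof (cases "a \<in> S")
  case True
  then have "- a \<in> S"
    using diff_closed[of a a] diff_closed[of 0 a] by simp
  then have "x + a \<in> S \<longleftrightarrow> x \<in> S" for x
    using True diff_closed[of "x + a" a] diff_closed[of x "- a"] by auto
  then have "?d x \<in> {\<alpha> - c * \<alpha>, 0}" for x
    by (cases "x \<in> S") simp_all
  then have "card (range ?d) \<le> card {\<alpha> - c * \<alpha>, 0}"
    by (intro card_mono) blast+
  also have "\<dots> \<le> 3"
    by (simp add: card_insert_if)
  finally show ?thesis .
next
  case False
  then have "\<not> (x + a \<in> S \<and> x \<in> S)" for x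
    using diff_closed[of "x + a" x] by auto
  then have "?d x \<in> {\<alpha>, - (c * \<alpha>), 0}" for x
    by (cases "x \<in> S"; cases "x + a \<in> S") simp_all
  then have "card (range ?d) \<le> card {\<alpha>, - (c * \<alpha>), 0}"
    by (intro card_mono) blast+
  also have "\<dots> \<le> 3"
    by (simp add: card_insert_if)
  finally show ?thesis .
qed

lemma c_diff_uniformity_le:
  fixes F :: "'a::{field,finite} \<Rightarrow> 'a"
  assumes "\<And>a b. c_Delta F c a b \<le> N"
  shows "c_diff_uniformity F c \<le> N"
proof -
  let ?D = "{c_Delta F c a b | a b. a \<noteq> 0 \<or> c \<noteq> 1}"
  have "?D \<subseteq> range (\<lambda>(a, b). c_Delta F c a b)"
    by auto
  then have "finite ?D"
    by (rule finite_subset) simp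
  moreover have "c_Delta F c 1 0 \<in> ?D"
    by auto
  ultimately show ?thesis
    unfolding c_diff_uniformity_def using assms by (intro Max.boundedI) blast+
qed

lemma subfield_pow2_diff:
  fixes x y :: "'a::field"
  assumes char2: "CHAR('a) = 2"
    and "x \<in> subfield_pow2 s" and "y \<in> subfield_pow2 s"
  shows "x - y \<in> subfield_pow2 s"
proof -
  have "(x + y) ^ (2 ^ s) = x ^ (2 ^ s) + y ^ (2 ^ s)"
    by (rule freshmans_dream') (simp_all add: char2)
  then show ?thesis
    using assms by (simp add: subfield_pow2_def minus_CHAR_2[OF char2])
qed

theorem theorem2p13:
  fixes s m n k :: nat and \<alpha> c :: "'a::{field,finite}"
  assumes "s > 0" and "m > 0" and "odd m" and "n = s * m"
    and "card (UNIV :: 'a set) = 2 ^ n"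
    and "k > 0"
    and "subfield_pow2 (gcd n k) \<subseteq> (subfield_pow2 s :: 'a set)"
    and "odd (n div gcd n k)"
    and "\<alpha> \<in> subfield_pow2 s" and "\<alpha> \<noteq> 0"
    and "c \<in> subfield_pow2 (gcd n k)" and "c \<noteq> 1"
  shows "c_diff_uniformity
           (\<lambda>x. x ^ (2 ^ k + 1) + \<alpha> * (x ^ (2 ^ s) + x) ^ (2 ^ n - 1) + \<alpha>) c \<le> 3"
proof -
  have "n > 0"
    using assms(1,2,4) by simp
  with assms(5) have char2: "CHAR('a) = 2"
    by (rule CHAR_eq_2_if_card_eq_power_2)
  have c_fixed: "c ^ (2 ^ k) = c"
    using assms(11) by (simp add: subfield_pow2_def power_power_fixed_dvd)
  let ?S = "subfield_pow2 s :: 'a set"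
  have "x ^ (2 ^ k + 1) + \<alpha> * (x ^ (2 ^ s) + x) ^ (2 ^ n - 1) + \<alpha>
      = x ^ (2 ^ k + 1) + \<alpha> * of_bool (x \<in> ?S)" for x :: 'a
    using power_card_minus_one_eq_of_bool[of "x ^ (2 ^ s) + x"] assms(5)
    by (simp add: subfield_pow2_def add_eq_0_iff2 uminus_CHAR_2[OF char2] two_eq_0_if_CHAR_2[OF char2])
  then have G_eq: "(\<lambda>x. x ^ (2 ^ k + 1) + \<alpha> * (x ^ (2 ^ s) + x) ^ (2 ^ n - 1) + \<alpha>)
      = (\<lambda>x. x ^ (2 ^ k + 1) + \<alpha> * of_bool (x \<in> ?S))"
    by (rule ext)
  show ?thesis
    unfolding G_eq
  proof (rule c_diff_uniformity_le)
    fix a b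
    have "c_Delta (\<lambda>x. x ^ (2 ^ k + 1) + \<alpha> * of_bool (x \<in> ?S)) c a b
        \<le> card (range (\<lambda>x. \<alpha> * of_bool (x + a \<in> ?S) - c * (\<alpha> * of_bool (x \<in> ?S))))"
      using inj_Gold_c_derivative[OF assms(5,8) c_fixed assms(12)]
      by (rule c_Delta_add_le_card_range)
    also have "\<dots> \<le> 3"
      using subfield_pow2_diff[OF char2] by (rule card_range_c_derivative_indicator_le_3)
    finally show "c_Delta (\<lambda>x. x ^ (2 ^ k + 1) + \<alpha> * of_bool (x \<in> ?S)) c a b \<le> 3" .
  qed
qed

end
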